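(* Let $n\ge 2$, $1\le k\le n$, and let $\rho=\sum_{i=0}^k\lambda_i|D_n^i\rangle\langle D_n^i|$ with $\lambda_i\ge 0$, $\sum_{i=0}^k\lambda_i=1$, and suppose there is exactly one index $i_*\in\{0,\dots,k\}$ with $\lambda_{i_*}=0$ (i.e. $\lambda_{i_*}=0$ and $\lambda_i\neq0$ for all $i\in\{0,\dots,k\}\setminus\{i_*\}$). Then $$L(\rho)=k+\min\{(k-i_* )\bmod 2,\ n-k\}.$$
   Context: Let $[n]=\{1,\dots,n\}$ and $\mathcal H_{[n]}=(\mathbb C^2)^{\otimes n}$. For $S\subseteq[n]$ and a density matrix $\rho$ on $\mathcal H_{[n]}$, $\rho_S$ is the partial trace of $\rho$ over the qubits not in $S$. For a collection $\mathcal S$ of subsets of $[n]$, $\mathcal C(\rho,\mathcal S)=\{\sigma\text{ density matrix on }\mathcal H_{[n]}:\sigma_S=\rho_S\ \forall S\in\mathcal S\}$; $\mathcal S$ determines $\rho$ if $\mathcal C(\rho,\mathcal S)=\{\rho\}$. The state determination length is $L(\rho)=\min_{\mathcal S\text{ determines }\rho}\max_{S\in\mathcal S}|S|$. Dicke states: $|D_n^i\rangle=\binom{n}{i}^{-1/2}\sum_{s\in\{0,1\}^n,\ \sum_j s_j=i}|s_1\rangle\otimes\cdots\otimes|s_n\rangle$ for $i=0,\dots,n$. *)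

theory Defs
  imports Complex_Main "HOL-Library.Complex_Order"
begin

text \<open>The computational basis vector |s_1...s_n> of
  H_[n] is labelled by the set x = {j. s_j = 1} \<subseteq> {1..n}. An operator on H_[n]
  is a function nat set \<Rightarrow> nat set \<Rightarrow> complex (matrix entries), only its values
  on Pow {1..n} being relevant. For S \<subseteq> {1..n}, H_S has basis Pow S.\<close>

type_synonym op = "nat set \<Rightarrow> nat set \<Rightarrow> complex"

definition qubits :: "nat \<Rightarrow> nat set" where
  "qubits n = {1..n}"

definition density :: "nat \<Rightarrow> op \<Rightarrow> bool" where
  "density n \<rho> \<longleftrightarrow>
     (\<forall>x\<in>Pow (qubits n). \<forall>y\<in>Pow (qubits n). \<rho> y x = cnj (\<rho> x y)) \<and>
     (\<forall>v :: nat set \<Rightarrow> complex.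
        0 \<le> (\<Sum>x\<in>Pow (qubits n). \<Sum>y\<in>Pow (qubits n). cnj (v x) * \<rho> x y * v y)) \<and>
     (\<Sum>x\<in>Pow (qubits n). \<rho> x x) = 1"

definition ptrace :: "nat \<Rightarrow> op \<Rightarrow> nat set \<Rightarrow> op" where
  "ptrace n \<rho> S a b = (\<Sum>c\<in>Pow (qubits n - S). \<rho> (a \<union> c) (b \<union> c))"

definition compatible :: "nat \<Rightarrow> op \<Rightarrow> nat set set \<Rightarrow> op set" where
  "compatible n \<rho> \<S> = {\<sigma>. density n \<sigma> \<and>
      (\<forall>S\<in>\<S>. \<forall>a\<in>Pow S. \<forall>b\<in>Pow S. ptrace n \<sigma> S a b = ptrace n \<rho> S a b)}"

definition determines :: "nat \<Rightarrow> nat set set \<Rightarrow> op \<Rightarrow> bool" where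
  "determines n \<S> \<rho> \<longleftrightarrow> \<S> \<subseteq> Pow (qubits n) \<and>
     (\<forall>\<sigma>\<in>compatible n \<rho> \<S>. \<forall>x\<in>Pow (qubits n). \<forall>y\<in>Pow (qubits n). \<sigma> x y = \<rho> x y)"

text \<open>State determination length: min over determining \<S> of max |S|
  (the max over the empty family read as 0; the full family {[n]} always determines).\<close>
definition sdl :: "nat \<Rightarrow> op \<Rightarrow> nat" where
  "sdl n \<rho> = (LEAST m. \<exists>\<S>. determines n \<S> \<rho> \<and> (\<forall>S\<in>\<S>. card S \<le> m))"

definition dicke :: "nat \<Rightarrow> nat \<Rightarrow> nat set \<Rightarrow> complex" where
  "dicke n i x = (if x \<subseteq> qubits n \<and> card x = i
                  then complex_of_real (1 / sqrt (real (n choose i))) else 0)"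

definition dicke_mix :: "nat \<Rightarrow> nat \<Rightarrow> (nat \<Rightarrow> real) \<Rightarrow> op" where
  "dicke_mix n k lam x y = (\<Sum>i=0..k. complex_of_real (lam i) * dicke n i x * cnj (dicke n i y))"

end

theory Submission
  imports Defs
begin

text \<open>Write \<open>m\<close> for the claimed length. For the lower bound, perturb the weights by a small
  multiple of \<open>(-1)\<^sup>w binom m w\<close>: every marginal on fewer than \<open>m\<close> qubits is a linear combination
  of the weights with coefficients polynomial in \<open>w\<close> of degree \<open>< m\<close>, which alternating binomial
  sums annihilate, and the parity condition is exactly what keeps the perturbed weights nonnegative.
  For the upper bound, take a state \<open>\<sigma>\<close> with the same marginals on \<open>m\<close> qubits. Its diagonal
  moments of order \<open>\<le> m\<close> agree with those of \<open>\<rho>\<close>, and testing against a polynomial with roots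
  at the weights carried by \<open>\<rho>\<close> shows that \<open>\<sigma>\<close> puts no weight above \<open>k\<close>. Downward induction
  on \<open>|b|\<close> then recovers the entries \<open>\<sigma> a b\<close> with \<open>a \<subseteq> b\<close>, and the two-qubit marginals force,
  via positive semidefiniteness, all columns of \<open>\<sigma>\<close> of equal Hamming weight to coincide, which
  determines \<open>\<sigma>\<close> by hermiticity.\<close>

section \<open>Falling factorials and orthogonality to polynomials\<close>

definition falling :: "nat \<Rightarrow> nat \<Rightarrow> real" where
  "falling w j = (\<Prod>i<j. real w - real i)"

lemma falling_Suc: "falling w (Suc j) = falling w j * (real w - real j)"
  by (simp add: falling_def)

lemma binomial_eq_falling: "real (w choose r) = falling w r / fact r"
  unfolding binomial_gbinomial falling_def gbinomial_prod_rev
  by (simp add: atLeast0LessThan)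

lemma sum_falling_prod_eq_0:
  fixes d :: "nat \<Rightarrow> real" and N :: "real set"
  assumes orth: "\<And>j. j \<le> r \<Longrightarrow> (\<Sum>w\<le>n. d w * falling w j) = 0"
    and "finite N" and "card N + j \<le> r"
  shows "(\<Sum>w\<le>n. d w * falling w j * (\<Prod>a\<in>N. real w - a)) = 0"
  using assms(2,3)
proof (induction N arbitrary: j rule: finite_induct)
  case empty
  then show ?case using orth by simp
next
  case (insert x N)
  \<comment> \<open>\<open>falling w j * (w - x) = falling w (j + 1) + (j - x) * falling w j\<close>\<close>
  have "(\<Sum>w\<le>n. d w * falling w j * (\<Prod>a\<in>insert x N. real w - a))
      = (\<Sum>w\<le>n. d w * falling w (Suc j) * (\<Prod>a\<in>N. real w - a))
        + (real j - x) * (\<Sum>w\<le>n. d w * falling w j * (\<Prod>a\<in>N. real w - a))"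
    using insert.hyps
    by (simp add: falling_Suc sum_distrib_left sum.distrib[symmetric] algebra_simps)
  then show ?case using insert by simp
qed

lemma sign_prod_diff_pos:
  fixes x :: real
  assumes "finite N" "x \<notin> N"
  shows "(-1) ^ card {a\<in>N. x < a} * (\<Prod>a\<in>N. x - a) > 0"
  using assms
proof (induction N rule: finite_induct)
  case empty
  then show ?case by simp
next
  case (insert b N)
  let ?s = "(-1) ^ card {a\<in>N. x < a} * (\<Prod>a\<in>N. x - a)"
  show ?case
  proof (cases "x < b")
    case True
    have "{a\<in>insert b N. x < a} = insert b {a\<in>N. x < a}" "b \<notin> {a\<in>N. x < a}"
      using True insert by auto
    then have "(-1) ^ card {a\<in>insert b N. x < a} * (\<Prod>a\<in>insert b N. x - a) = ?s * (b - x)"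
      using insert by (simp add: algebra_simps)
    also have "\<dots> > 0" by (rule mult_pos_pos) (use insert True in auto)
    finally show ?thesis .
  next
    case False
    then have "{a\<in>insert b N. x < a} = {a\<in>N. x < a}" by auto
    then have "(-1) ^ card {a\<in>insert b N. x < a} * (\<Prod>a\<in>insert b N. x - a) = ?s * (x - b)"
      using insert by (simp add: algebra_simps)
    also have "\<dots> > 0" by (rule mult_pos_pos) (use insert False in auto)
    finally show ?thesis .
  qed
qed

lemma orthogonal_nonneg_prod_eq_0:
  fixes d :: "nat \<Rightarrow> real" and N :: "real set"
  assumes orth: "\<And>j. j \<le> m \<Longrightarrow> (\<Sum>w\<le>n. d w * falling w j) = 0"
    and "finite N" "card N \<le> m"
    and nonneg: "\<And>v. v \<le> n \<Longrightarrow> d v * (\<Prod>a\<in>N. real v - a) \<ge> 0"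
    and "w \<le> n"
  shows "d w * (\<Prod>a\<in>N. real w - a) = 0"
proof -
  have "(\<Sum>v\<le>n. d v * falling v 0 * (\<Prod>a\<in>N. real v - a)) = 0"
    using sum_falling_prod_eq_0[OF orth] assms(2,3) by simp
  then have "(\<Sum>v\<le>n. d v * (\<Prod>a\<in>N. real v - a)) = 0" by (simp add: falling_def)
  then show ?thesis
    using nonneg sum_nonneg_eq_0_iff[of "{..n}" "\<lambda>v. d v * (\<Prod>a\<in>N. real v - a)"] \<open>w \<le> n\<close> by auto
qed

text \<open>Test \<open>d\<close> against the polynomial with roots \<open>{0..k} - {i}\<close>, together with \<open>k + 1/2\<close> when
  \<open>k - i\<close> is odd: it has degree at most \<open>m\<close> and is positive at \<open>i\<close> and above \<open>k\<close>.\<close>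

lemma orthogonal_sequence_vanishes_above:
  fixes d :: "nat \<Rightarrow> real"
  assumes "k < n" "i \<le> k" "k + (k - i) mod 2 \<le> m"
    and orth: "\<And>j. j \<le> m \<Longrightarrow> (\<Sum>w\<le>n. d w * falling w j) = 0"
    and nonneg_i: "d i \<ge> 0" and nonneg_above: "\<And>w. k < w \<Longrightarrow> w \<le> n \<Longrightarrow> d w \<ge> 0"
    and "k < w" "w \<le> n"
  shows "d w = 0"
proof -
  define E :: "real set" where "E = (if odd (k - i) then {real k + 1/2} else {})"
  define N where "N = real ` ({0..k} - {i}) \<union> E"
  define P where "P v = (\<Prod>a\<in>N. real v - a)" for v :: nat
  have fin: "finite N" by (simp add: N_def E_def)
  have half_not_nat: "real k + 1/2 \<noteq> real v" for v
  proof
    assume "real k + 1/2 = real v"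
    then have "2 * k + 1 = 2 * v" by linarith
    then show False by presburger
  qed
  have "card E = (k - i) mod 2"
    unfolding E_def using mod2_eq_if[of "k - i"] by (simp del: even_diff_nat)
  then have "card N \<le> m"
    using card_Un_le[of "real ` ({0..k} - {i})" E] assms(2,3) by (simp add: N_def card_image)
  have P_above: "P v > 0" if "k < v" for v
    unfolding P_def using that by (intro prod_pos) (auto simp: N_def E_def split: if_splits)
  have P_i: "P i > 0"
  proof -
    have "{a\<in>N. real i < a} = real ` {i<..k} \<union> E"
      using assms(2) by (auto simp: N_def E_def)
    moreover have "real ` {i<..k} \<inter> E = {}" using half_not_nat by (auto simp: E_def)
    ultimately have "even (card {a\<in>N. real i < a})"
      by (simp add: card_Un_disjoint card_image E_def)
    moreover have "real i \<notin> N" using half_not_nat by (auto simp: N_def E_def)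
    ultimately show ?thesis
      using sign_prod_diff_pos[OF fin, of "real i"] by (simp add: P_def)
  qed
  have "d v * P v \<ge> 0" if "v \<le> n" for v
  proof -
    consider "v \<le> k" "v \<noteq> i" | "v = i" | "k < v" by linarith
    then show ?thesis
    proof cases
      case 1
      then have "P v = 0" unfolding P_def using fin by (intro prod_zero) (auto simp: N_def)
      then show ?thesis by simp
    qed (use P_i P_above[of v] nonneg_i nonneg_above[of v] that in auto)
  qed
  then have "d w * P w = 0"
    using orthogonal_nonneg_prod_eq_0[OF orth fin \<open>card N \<le> m\<close> _ \<open>w \<le> n\<close>] by (simp add: P_def)
  then show ?thesis using P_above[OF \<open>k < w\<close>] by simp
qed

lemma choose_mult_comm:
  fixes N A B :: nat
  shows "(N choose A) * ((N - A) choose B) = (N choose B) * ((N - B) choose A)"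
proof (cases "A + B \<le> N")
  case True
  have "(N choose (A + B)) * ((A + B) choose A) = (N choose A) * ((N - A) choose B)"
       "(N choose (A + B)) * ((A + B) choose B) = (N choose B) * ((N - B) choose A)"
    using choose_mult[of A "A + B" N] choose_mult[of B "A + B" N] True by simp_all
  moreover have "(A + B) choose A = (A + B) choose B"
    using binomial_symmetric[of A "A + B"] by simp
  ultimately show ?thesis by simp
next
  case False
  then show ?thesis by (cases "A \<le> N"; cases "B \<le> N") (simp_all add: binomial_eq_0)
qed

lemma choose_mult_trinomial:
  assumes "r \<le> w" "w \<le> n" "r \<le> s" "s \<le> n"
  shows "((n - s) choose (w - r)) * (n choose s) * (s choose r)
       = (n choose w) * (w choose r) * ((n - w) choose (s - r))"
proof -
  have "(n choose w) * (w choose r) = (n choose r) * ((n - r) choose (w - r))"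
       "(n choose s) * (s choose r) = (n choose r) * ((n - r) choose (s - r))"
    using choose_mult assms by blast+
  moreover have "((n - r) choose (w - r)) * ((n - w) choose (s - r))
      = ((n - r) choose (s - r)) * ((n - s) choose (w - r))"
    using choose_mult_comm[of "n - r" "w - r" "s - r"] assms by (simp add: diff_diff_eq)
  ultimately show ?thesis by (simp add: mult_ac)
qed

lemma binomial_diff_eq_prod:
  assumes "w \<le> n"
  shows "real ((n - w) choose t) = (-1) ^ t * (\<Prod>i<t. real w - (real n - real i)) / fact t"
proof -
  have "real ((n - w) choose t) = falling (n - w) t / fact t" by (rule binomial_eq_falling)
  also have "falling (n - w) t = (\<Prod>i<t. (-1) * (real w - (real n - real i)))"
    unfolding falling_def using assms by (intro prod.cong refl) (simp add: of_nat_diff)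
  also have "\<dots> = (-1) ^ t * (\<Prod>i<t. real w - (real n - real i))"
    by (subst prod.distrib) simp
  finally show ?thesis by simp
qed

lemma sum_alternating_choose_mult_choose:
  assumes "j < m"
  shows "(\<Sum>w\<le>m. (-1) ^ w * real (m choose w) * real (w choose j)) = 0"
proof -
  have "(\<Sum>w\<le>m. (-1) ^ w * real (m choose w) * real (w choose j))
      = (\<Sum>w\<in>{j..m}. (-1) ^ w * real (m choose j) * real ((m - j) choose (w - j)))"
  proof (rule sum.mono_neutral_cong_right)
    show "(-1) ^ w * real (m choose w) * real (w choose j)
        = (-1) ^ w * real (m choose j) * real ((m - j) choose (w - j))" if "w \<in> {j..m}" for w
      using that choose_mult[of j w m] by (simp flip: of_nat_mult)
  qed auto
  also have "\<dots> = (\<Sum>u\<le>m - j. (-1) ^ (u + j) * real (m choose j) * real ((m - j) choose u))"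
    using sum.shift_bounds_cl_nat_ivl[of "\<lambda>w. (-1) ^ w * real (m choose j) * real ((m - j) choose (w - j))" 0 j "m - j"] assms
    by (simp add: atLeast0AtMost)
  also have "\<dots> = (-1) ^ j * real (m choose j) * (\<Sum>u\<le>m - j. (-1) ^ u * real ((m - j) choose u))"
    by (simp add: sum_distrib_left power_add mult_ac)
  also have "\<dots> = 0" using choose_alternating_sum[of "m - j"] assms by simp
  finally show ?thesis .
qed

lemma marginal_coefficient_eq_polynomial:
  assumes w: "w \<le> n" and "r \<le> s" "s \<le> n"
  shows "(if r \<le> w then real ((n - s) choose (w - r)) else 0) / real (n choose w)
    = (-1) ^ (s - r) / (real (n choose s) * real (s choose r) * fact r * fact (s - r))
      * (falling w r * (\<Prod>i<s - r. real w - (real n - real i)))"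
proof (cases "r \<le> w")
  case True
  define K where "K = real (n choose s) * real (s choose r)"
  have "K > 0" using assms by (simp add: K_def)
  have "real ((n - s) choose (w - r)) * K
      = real (n choose w) * (real (w choose r) * real ((n - w) choose (s - r)))"
    using arg_cong[OF choose_mult_trinomial[OF True assms], of real]
    unfolding K_def by (simp add: mult.assoc)
  then have "real ((n - s) choose (w - r)) / real (n choose w)
      = real (w choose r) * real ((n - w) choose (s - r)) / K"
    using w \<open>K > 0\<close> by (simp add: divide_simps)
  also have "\<dots> = (falling w r / fact r)
      * ((-1) ^ (s - r) * (\<Prod>i<s - r. real w - (real n - real i)) / fact (s - r)) / K"
    by (simp only: binomial_diff_eq_prod[OF w] binomial_eq_falling[of w r])
  finally show ?thesis
    using True by (simp add: K_def divide_inverse mult_ac inverse_mult_distrib)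
next
  case False
  then have "falling w r = 0" unfolding falling_def by (intro prod_zero) auto
  then show ?thesis using False by simp
qed

text \<open>By the trinomial revision the coefficient of \<open>(-1)\<^sup>w binom m w\<close> is a polynomial in \<open>w\<close>
  of degree \<open>s < m\<close>, and alternating binomial sums annihilate such polynomials.\<close>

lemma sum_alternating_marginal_eq_0:
  assumes "m \<le> n" "s < m" "r \<le> s"
  shows "(\<Sum>w\<le>n. (if w \<le> m then (-1) ^ w * real (m choose w) else 0) *
      (if r \<le> w then real ((n - s) choose (w - r)) else 0) / real (n choose w)) = 0"
proof -
  define d where "d w = (if w \<le> m then (-1) ^ w * real (m choose w) else 0)" for w
  define N where "N = (\<lambda>i. real n - real i) ` {..<s - r}"
  define c where "c = (-1) ^ (s - r) / (real (n choose s) * real (s choose r) * fact r * fact (s - r))"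
  have orth: "(\<Sum>w\<le>n. d w * falling w j) = 0" if "j \<le> m - 1" for j
  proof -
    have "(\<Sum>w\<le>n. d w * falling w j) = (\<Sum>w\<le>m. d w * falling w j)"
      using assms by (intro sum.mono_neutral_right) (auto simp: d_def)
    also have "\<dots> = fact j * (\<Sum>w\<le>m. (-1) ^ w * real (m choose w) * real (w choose j))"
      by (simp add: sum_distrib_left d_def binomial_eq_falling mult_ac)
    also have "\<dots> = 0" using sum_alternating_choose_mult_choose[of j m] that assms by simp
    finally show ?thesis .
  qed
  have prod_N: "(\<Prod>a\<in>N. real w - a) = (\<Prod>i<s - r. real w - (real n - real i))" for w
    unfolding N_def by (subst prod.reindex) (auto intro: inj_onI)
  have "card N = s - r" unfolding N_def by (subst card_image) (auto intro: inj_onI)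
  then have "(\<Sum>w\<le>n. d w * falling w r * (\<Prod>a\<in>N. real w - a)) = 0"
    using sum_falling_prod_eq_0[where r = "m - 1" and N = N and j = r, OF orth] assms
    by (simp add: N_def)
  moreover have "d w * (if r \<le> w then real ((n - s) choose (w - r)) else 0) / real (n choose w)
      = c * (d w * falling w r * (\<Prod>a\<in>N. real w - a))" if "w \<le> n" for w
    using marginal_coefficient_eq_polynomial[OF that assms(3)] assms
    unfolding prod_N c_def by (simp add: times_divide_eq_right[symmetric] del: times_divide_eq_right)
  ultimately show ?thesis
    unfolding d_def[symmetric] by (simp add: sum_distrib_left[symmetric])
qed

section \<open>Positive semidefinite operators\<close>

definition sesq :: "nat \<Rightarrow> op \<Rightarrow> (nat set \<Rightarrow> complex) \<Rightarrow> (nat set \<Rightarrow> complex) \<Rightarrow> complex" where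
  "sesq n \<sigma> u v = (\<Sum>x\<in>Pow (qubits n). \<Sum>y\<in>Pow (qubits n). cnj (u x) * \<sigma> x y * v y)"

definition ket :: "nat set \<Rightarrow> nat set \<Rightarrow> complex" where
  "ket x w = of_bool (w = x)"

lemma finite_qubits [simp]: "finite (qubits n)" and card_qubits [simp]: "card (qubits n) = n"
  by (simp_all add: qubits_def)

lemma sum_mult_ket: "finite A \<Longrightarrow> y \<in> A \<Longrightarrow> (\<Sum>w\<in>A. f w * ket y w) = f y"
  by (simp add: ket_def Int_insert_right_if1)

lemma cnj_ket [simp]: "cnj (ket x w) = ket x w"
  by (simp add: ket_def)

lemma sesq_ket [simp]:
  assumes "x \<in> Pow (qubits n)" "y \<in> Pow (qubits n)"
  shows "sesq n \<sigma> (ket x) (ket y) = \<sigma> x y"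
  using assms unfolding sesq_def
  by (simp add: sum_mult_ket mult.commute[of "ket x _"] sum_distrib_right[symmetric])

lemma sesq_eq_sum_row: "sesq n \<sigma> u v = (\<Sum>x\<in>Pow (qubits n). cnj (u x) * (\<Sum>y\<in>Pow (qubits n). \<sigma> x y * v y))"
  unfolding sesq_def by (simp add: sum_distrib_left mult.assoc)

lemma sesq_diff_left: "sesq n \<sigma> (\<lambda>w. u1 w - u2 w) v = sesq n \<sigma> u1 v - sesq n \<sigma> u2 v"
  unfolding sesq_eq_sum_row by (simp add: algebra_simps sum_subtractf)

lemma sesq_diff_right: "sesq n \<sigma> u (\<lambda>w. v1 w - v2 w) = sesq n \<sigma> u v1 - sesq n \<sigma> u v2"
  unfolding sesq_eq_sum_row by (simp add: algebra_simps sum_subtractf)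

lemma sesq_add_scaled:
  "sesq n \<sigma> (\<lambda>x. v x + t * u x) (\<lambda>x. v x + t * u x)
   = sesq n \<sigma> v v + t * sesq n \<sigma> v u + cnj t * sesq n \<sigma> u v + cnj t * t * sesq n \<sigma> u u"
  unfolding sesq_def sum_distrib_left by (simp only: sum.distrib[symmetric]) (simp add: algebra_simps)

lemma density_hermitian:
  "density n \<sigma> \<Longrightarrow> x \<in> Pow (qubits n) \<Longrightarrow> y \<in> Pow (qubits n) \<Longrightarrow> \<sigma> y x = cnj (\<sigma> x y)"
  unfolding density_def by blast

lemma density_sesq_nonneg: "density n \<sigma> \<Longrightarrow> 0 \<le> sesq n \<sigma> v v"
  unfolding density_def sesq_def by blast

lemma density_sesq_cnj:
  assumes "density n \<sigma>"
  shows "sesq n \<sigma> u v = cnj (sesq n \<sigma> v u)"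
proof -
  have "cnj (sesq n \<sigma> v u) = (\<Sum>x\<in>Pow (qubits n). \<Sum>y\<in>Pow (qubits n). v x * \<sigma> y x * cnj (u y))"
    unfolding sesq_def cnj_sum
  proof (intro sum.cong refl)
    fix x y assume "x \<in> Pow (qubits n)" "y \<in> Pow (qubits n)"
    then show "cnj (cnj (v x) * \<sigma> x y * u y) = v x * \<sigma> y x * cnj (u y)"
      using density_hermitian[OF assms, of x y] by simp
  qed
  also have "\<dots> = sesq n \<sigma> u v"
    unfolding sesq_def by (subst sum.swap) (simp add: mult_ac)
  finally show ?thesis by simp
qed

lemma density_sesq_kernel:
  assumes dens: "density n \<sigma>" and null: "sesq n \<sigma> v v = 0"
  shows "sesq n \<sigma> v u = 0"
proof -
  define \<beta> where "\<beta> = sesq n \<sigma> v u"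
  define q where "q = Re (sesq n \<sigma> u u)"
  have "q \<ge> 0" and quu: "sesq n \<sigma> u u = of_real q"
    using density_sesq_nonneg[OF dens, of u]
    by (auto simp: q_def less_eq_complex_def complex_eq_iff)
  define s where "s = 1 / (q + 1)"
  have "s > 0" "s * q < 1" using \<open>q \<ge> 0\<close> by (simp_all add: s_def field_simps)
  \<comment> \<open>the vector \<open>v - s \<beta>\<^sup>* u\<close> would have negative norm unless \<open>\<beta> = 0\<close>\<close>
  define t where "t = - (of_real s * cnj \<beta>)"
  have "0 \<le> sesq n \<sigma> (\<lambda>x. v x + t * u x) (\<lambda>x. v x + t * u x)"
    using density_sesq_nonneg[OF dens] .
  also have "\<dots> = t * \<beta> + cnj t * cnj \<beta> + cnj t * t * of_real q"
    using sesq_add_scaled null quu density_sesq_cnj[OF dens, of u v] by (simp add: \<beta>_def)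
  finally have "0 \<le> Re (t * \<beta> + cnj t * cnj \<beta> + cnj t * t * of_real q)"
    by (simp add: less_eq_complex_def)
  also have "Re (t * \<beta> + cnj t * cnj \<beta> + cnj t * t * of_real q) = (cmod \<beta>)\<^sup>2 * (s * (s * q - 2))"
    unfolding t_def cmod_power2 by (simp add: algebra_simps power2_eq_square)
  finally have "0 \<le> (cmod \<beta>)\<^sup>2 * (s * (s * q - 2))" .
  moreover have "s * (s * q - 2) < 0" using \<open>s > 0\<close> \<open>s * q < 1\<close> by (intro mult_pos_neg) auto
  ultimately have "(cmod \<beta>)\<^sup>2 \<le> 0" by (smt (verit) mult_pos_neg)
  then show ?thesis by (simp add: \<beta>_def)
qed

lemma density_diag_nonneg:
  "density n \<sigma> \<Longrightarrow> x \<in> Pow (qubits n) \<Longrightarrow> 0 \<le> \<sigma> x x"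
  using density_sesq_nonneg[of n \<sigma> "ket x"] by simp

lemma density_diag_zero:
  assumes dens: "density n \<sigma>" and x: "x \<in> Pow (qubits n)" and z: "z \<in> Pow (qubits n)"
    and "\<sigma> x x = 0"
  shows "\<sigma> x z = 0" "\<sigma> z x = 0"
proof -
  show "\<sigma> x z = 0"
    using density_sesq_kernel[OF dens, of "ket x" "ket z"] assms by simp
  then show "\<sigma> z x = 0" using density_hermitian[OF dens x z] by simp
qed

lemma density_columns_eq:
  assumes dens: "density n \<sigma>"
    and x: "x \<in> Pow (qubits n)" and y: "y \<in> Pow (qubits n)" and z: "z \<in> Pow (qubits n)"
    and "\<sigma> x x + \<sigma> y y - \<sigma> x y - \<sigma> y x = 0"
  shows "\<sigma> z x = \<sigma> z y"
proof -
  define v where "v = (\<lambda>w. ket x w - ket y w)"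
  have "sesq n \<sigma> v v = \<sigma> x x + \<sigma> y y - \<sigma> x y - \<sigma> y x"
    using x y by (simp add: v_def sesq_diff_left sesq_diff_right)
  then have "sesq n \<sigma> v (ket z) = 0"
    using density_sesq_kernel[OF dens, of v "ket z"] assms(5) by simp
  then have "sesq n \<sigma> (ket z) v = 0"
    using density_sesq_cnj[OF dens, of "ket z" v] by simp
  then show ?thesis using x y z by (simp add: v_def sesq_diff_right)
qed

lemma density_re_le_diag:
  assumes dens: "density n \<sigma>" and x: "x \<in> Pow (qubits n)" and y: "y \<in> Pow (qubits n)"
  shows "2 * Re (\<sigma> x y) \<le> Re (\<sigma> x x) + Re (\<sigma> y y)"
proof -
  have "0 \<le> sesq n \<sigma> (\<lambda>w. ket x w - ket y w) (\<lambda>w. ket x w - ket y w)"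
    using density_sesq_nonneg[OF dens] .
  also have "\<dots> = \<sigma> x x - \<sigma> x y - \<sigma> y x + \<sigma> y y"
    using x y by (simp add: sesq_diff_left sesq_diff_right)
  finally show ?thesis
    using density_hermitian[OF dens x y] by (simp add: less_eq_complex_def)
qed

section \<open>Mixtures of Dicke states and their marginals\<close>

lemma dicke_mix_entry:
  "dicke_mix n K \<mu> x y =
    (if x \<subseteq> qubits n \<and> y \<subseteq> qubits n \<and> card x = card y \<and> card x \<le> K
     then complex_of_real (\<mu> (card x) / real (n choose card x)) else 0)"
proof (cases "x \<subseteq> qubits n \<and> y \<subseteq> qubits n \<and> card x = card y")
  case True
  then have "card x \<le> n" using card_mono[of "qubits n" x] by simp
  then have "complex_of_real (1 / sqrt (real (n choose card x))) * complex_of_real (1 / sqrt (real (n choose card x)))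
      = complex_of_real (1 / real (n choose card x))"
    by (simp flip: of_real_mult)
  then have "complex_of_real (\<mu> i) * dicke n i x * cnj (dicke n i y)
      = (if i = card x then complex_of_real (\<mu> (card x) / real (n choose card x)) else 0)" for i
    using True by (simp add: dicke_def mult.assoc)
  then show ?thesis using True by (simp add: dicke_mix_def)
next
  case False
  then have "dicke_mix n K \<mu> x y = 0"
    unfolding dicke_mix_def by (intro sum.neutral) (auto simp: dicke_def)
  then show ?thesis using False by auto
qed

lemma dicke_mix_add_scaled:
  "dicke_mix n K (\<lambda>i. \<mu> i + c * \<nu> i) x y = dicke_mix n K \<mu> x y + of_real c * dicke_mix n K \<nu> x y"
  by (simp add: dicke_mix_def sum.distrib sum_distrib_left algebra_simps)

lemma dicke_mix_truncate:
  assumes "K \<le> M"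
  shows "dicke_mix n M (\<lambda>i. if i \<le> K then \<mu> i else 0) = dicke_mix n K \<mu>"
  using assms by (intro ext) (simp add: dicke_mix_entry)

lemma sesq_dicke_mix_nonneg:
  assumes "\<forall>i\<le>K. \<mu> i \<ge> 0"
  shows "0 \<le> sesq n (dicke_mix n K \<mu>) v v"
proof -
  let ?P = "Pow (qubits n)"
  define \<alpha> where "\<alpha> i = (\<Sum>y\<in>?P. cnj (dicke n i y) * v y)" for i
  have dicke_real: "cnj (dicke n i x) = dicke n i x" for i x by (simp add: dicke_def)
  have "sesq n (dicke_mix n K \<mu>) v v = (\<Sum>x\<in>?P. \<Sum>y\<in>?P. \<Sum>i=0..K.
          complex_of_real (\<mu> i) * (cnj (v x) * dicke n i x) * (cnj (dicke n i y) * v y))"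
    unfolding sesq_def dicke_mix_def by (simp add: sum_distrib_left sum_distrib_right mult_ac)
  also have "\<dots> = (\<Sum>i=0..K. \<Sum>x\<in>?P. \<Sum>y\<in>?P.
          complex_of_real (\<mu> i) * (cnj (v x) * dicke n i x) * (cnj (dicke n i y) * v y))"
    by (simp add: sum.swap[of _ "{0..K}"])
  also have "\<dots> = (\<Sum>i=0..K. complex_of_real (\<mu> i) * cnj (\<alpha> i) * \<alpha> i)"
    unfolding \<alpha>_def by (simp add: sum_distrib_left sum_distrib_right cnj_sum dicke_real mult_ac)
  also have "\<dots> = (\<Sum>i=0..K. complex_of_real (\<mu> i * (cmod (\<alpha> i))\<^sup>2))"
    by (intro sum.cong refl)
      (simp add: complex_mult_cnj mult.assoc[symmetric] mult.commute cmod_power2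
        flip: of_real_power of_real_add)
  also have "\<dots> \<ge> 0"
    using assms by (intro sum_nonneg) (auto simp: less_eq_complex_def)
  finally show ?thesis .
qed

lemma card_subsets_disjoint_weight:
  assumes "S \<subseteq> qubits n" "r \<le> card S"
  shows "card {c \<in> Pow (qubits n - S). card c + r = w}
       = (if r \<le> w then (n - card S) choose (w - r) else 0)"
proof (cases "r \<le> w")
  case True
  have "{c \<in> Pow (qubits n - S). card c + r = w} = {c. c \<subseteq> qubits n - S \<and> card c = w - r}"
    using True by auto
  moreover have "card (qubits n - S) = n - card S"
    using assms by (simp add: card_Diff_subset finite_subset)
  ultimately show ?thesis using True by (simp add: n_subsets)
qed auto

lemma ptrace_dicke_mix:
  assumes S: "S \<subseteq> qubits n" and a: "a \<subseteq> S" and b: "b \<subseteq> S"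
  shows "ptrace n (dicke_mix n K \<mu>) S a b =
    (if card a = card b then (\<Sum>w\<le>n. complex_of_real ((if w \<le> K then \<mu> w else 0) *
        (if card a \<le> w then real ((n - card S) choose (w - card a)) else 0) / real (n choose w))) else 0)"
proof -
  let ?C = "Pow (qubits n - S)"
  have finS: "finite S" by (rule finite_subset[OF S]) simp
  have card_Un: "card (x \<union> c) = card x + card c" if "x \<subseteq> S" "c \<in> ?C" for x c
    using that finS by (subst card_Un_disjoint) (auto intro: finite_subset)
  define g where "g w = (if w \<le> K then complex_of_real (\<mu> w / real (n choose w)) else 0)" for w
  have entry: "dicke_mix n K \<mu> (a \<union> c) (b \<union> c) = (if card a = card b then g (card c + card a) else 0)"
    if "c \<in> ?C" for c
    using that a b S card_Un[OF a that] card_Un[OF b that]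
    by (auto simp: dicke_mix_entry g_def add.commute)
  show ?thesis
  proof (cases "card a = card b")
    case True
    define r where "r = card a"
    have "r \<le> card S" using a finS by (simp add: r_def card_mono)
    have "ptrace n (dicke_mix n K \<mu>) S a b = (\<Sum>c\<in>?C. g (card c + r))"
      unfolding ptrace_def using entry True r_def by simp
    also have "\<dots> = (\<Sum>w\<le>n. \<Sum>c\<in>{c\<in>?C. card c + r = w}. g (card c + r))"
    proof (rule sum.group[symmetric])
      show "(\<lambda>c. card c + r) ` ?C \<subseteq> {..n}"
      proof
        fix w assume "w \<in> (\<lambda>c. card c + r) ` ?C"
        then obtain c where c: "c \<in> ?C" "w = card c + r" by auto
        have "S \<union> c \<subseteq> qubits n" using c S by auto
        then have "card (S \<union> c) \<le> n" using card_mono[of "qubits n" "S \<union> c"] by simp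
        then show "w \<in> {..n}" using card_Un[of S c] c \<open>r \<le> card S\<close> by simp
      qed
    qed auto
    also have "\<dots> = (\<Sum>w\<le>n. of_nat (card {c\<in>?C. card c + r = w}) * g w)"
      by (intro sum.cong refl) simp
    also have "\<dots> = (\<Sum>w\<le>n. complex_of_real ((if w \<le> K then \<mu> w else 0) *
        (if card a \<le> w then real ((n - card S) choose (w - card a)) else 0) / real (n choose w)))"
      using card_subsets_disjoint_weight[OF S \<open>r \<le> card S\<close>]
      by (intro sum.cong refl) (simp add: g_def r_def)
    finally show ?thesis using True by simp
  qed (simp add: ptrace_def entry)
qed

lemma trace_dicke_mix:
  assumes "K \<le> n"
  shows "(\<Sum>x\<in>Pow (qubits n). dicke_mix n K \<mu> x x) = complex_of_real (\<Sum>i=0..K. \<mu> i)"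
proof -
  have "(\<Sum>x\<in>Pow (qubits n). dicke_mix n K \<mu> x x) = ptrace n (dicke_mix n K \<mu>) {} {} {}"
    by (simp add: ptrace_def)
  also have "\<dots> = (\<Sum>w\<le>n. complex_of_real
      ((if w \<le> K then \<mu> w else 0) * real (n choose w) / real (n choose w)))"
    using ptrace_dicke_mix[of "{}" n "{}" "{}" K \<mu>] by simp
  also have "\<dots> = complex_of_real (\<Sum>w\<le>n. if w \<le> K then \<mu> w else 0)"
    by (simp add: of_real_sum[symmetric] del: of_real_sum)
  also have "(\<Sum>w\<le>n. if w \<le> K then \<mu> w else 0) = (\<Sum>w\<in>{w\<in>{..n}. w \<le> K}. \<mu> w)"
    by (rule sum.inter_filter[symmetric]) simp
  also have "{w\<in>{..n}. w \<le> K} = {0..K}" using assms by auto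
  finally show ?thesis .
qed

lemma density_dicke_mix:
  assumes "K \<le> n" "\<forall>i\<le>K. \<mu> i \<ge> 0" "(\<Sum>i=0..K. \<mu> i) = 1"
  shows "density n (dicke_mix n K \<mu>)"
  unfolding density_def
proof (intro conjI ballI allI)
  show "dicke_mix n K \<mu> y x = cnj (dicke_mix n K \<mu> x y)" for x y
    by (simp add: dicke_mix_entry)
  show "0 \<le> (\<Sum>x\<in>Pow (qubits n). \<Sum>y\<in>Pow (qubits n). cnj (v x) * dicke_mix n K \<mu> x y * v y)" for v
    using sesq_dicke_mix_nonneg[OF assms(2), of n v] unfolding sesq_def .
  show "(\<Sum>x\<in>Pow (qubits n). dicke_mix n K \<mu> x x) = 1"
    unfolding trace_dicke_mix[OF assms(1)] assms(3) by simp
qed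

section \<open>Lower bound\<close>

lemma ptrace_add_scaled:
  "ptrace n (\<lambda>x y. \<sigma> x y + c * \<tau> x y) S a b = ptrace n \<sigma> S a b + c * ptrace n \<tau> S a b"
  by (simp add: ptrace_def sum.distrib sum_distrib_left)

lemma ptrace_dicke_mix_alternating:
  assumes "m \<le> n" "S \<subseteq> qubits n" "card S < m" "a \<subseteq> S" "b \<subseteq> S"
  shows "ptrace n (dicke_mix n m (\<lambda>w. (-1) ^ w * real (m choose w))) S a b = 0"
proof -
  have "card a \<le> card S" using assms(2,4) by (intro card_mono) (auto intro: finite_subset)
  show ?thesis
  proof (cases "card a = card b")
    case True
    show ?thesis
      using sum_alternating_marginal_eq_0[OF assms(1,3) \<open>card a \<le> card S\<close>]
      unfolding ptrace_dicke_mix[OF assms(2,4,5)] if_P[OF True] of_real_sum[symmetric]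
      by (simp del: of_real_sum)
  qed (simp add: ptrace_dicke_mix[OF assms(2,4,5)])
qed

lemma exists_pos_le_nonzero_weights:
  fixes lam :: "nat \<Rightarrow> real"
  assumes nonneg: "\<forall>i\<le>k. lam i \<ge> 0" and nonzero: "\<forall>i\<le>k. i \<noteq> istar \<longrightarrow> lam i \<noteq> 0"
  obtains \<epsilon> where "\<epsilon> > 0" "\<And>i. i \<le> k \<Longrightarrow> i \<noteq> istar \<Longrightarrow> \<epsilon> \<le> lam i"
proof -
  define A where "A = {i. i \<le> k \<and> i \<noteq> istar}"
  have "finite A" by (simp add: A_def)
  have "lam i > 0" if "i \<in> A" for i
    using nonneg nonzero that unfolding A_def by (simp add: order_less_le)
  then have "Min (insert 1 (lam ` A)) > 0" using \<open>finite A\<close> by (simp add: Min_gr_iff)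
  moreover have "Min (insert 1 (lam ` A)) \<le> lam i" if "i \<le> k" "i \<noteq> istar" for i
    using \<open>finite A\<close> that by (intro Min_le) (auto simp: A_def)
  ultimately show ?thesis using that by blast
qed

lemma alternating_perturbation_nonneg:
  fixes lam :: "nat \<Rightarrow> real"
  assumes nonneg: "\<forall>i\<le>k. lam i \<ge> 0" and "istar \<le> k" "\<epsilon> \<ge> 0"
    and small: "\<And>i. i \<le> k \<Longrightarrow> i \<noteq> istar \<Longrightarrow> \<epsilon> * 2 ^ m \<le> lam i"
    and m: "m = k \<or> m = Suc k \<and> odd (k - istar)" and "w \<le> m"
  shows "0 \<le> (if w \<le> k then lam w else 0) + \<epsilon> * (-1) ^ (istar + w) * real (m choose w)"
proof (cases "even (istar + w)")
  case True
  then show ?thesis using nonneg \<open>\<epsilon> \<ge> 0\<close> by simp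
next
  case False
  then have "w \<le> k" "w \<noteq> istar"
    using m \<open>w \<le> m\<close> \<open>istar \<le> k\<close> by (auto simp del: even_diff_nat) presburger+
  moreover have "\<epsilon> * real (m choose w) \<le> \<epsilon> * 2 ^ m"
    using binomial_le_pow2[of m w] \<open>\<epsilon> \<ge> 0\<close> by (intro mult_left_mono) (simp_all flip: of_nat_power)
  ultimately show ?thesis using small[of w] False by simp
qed

lemma sum_alternating_perturbation:
  assumes "0 < m" "k \<le> m"
  shows "(\<Sum>i=0..m. (if i \<le> k then lam i else 0) + c * ((-1) ^ i * real (m choose i)))
       = (\<Sum>i=0..k. lam i)"
proof -
  have "(\<Sum>i=0..m. if i \<le> k then lam i else 0) = (\<Sum>i=0..k. lam i)"
    using assms by (intro sum.mono_neutral_cong_right) auto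
  moreover have "(\<Sum>i=0..m. (-1) ^ i * real (m choose i)) = 0"
    using choose_alternating_sum[OF assms(1)] by (simp add: atLeast0AtMost)
  ultimately show ?thesis by (simp add: sum.distrib flip: sum_distrib_left)
qed

text \<open>The sign of the perturbation is chosen so that the weight of \<open>D_n^i\<^sub>*\<close> becomes positive.\<close>

lemma obtain_marginal_twin_dicke_mix:
  fixes lam :: "nat \<Rightarrow> real"
  assumes "1 \<le> k" "k \<le> n" "\<forall>i\<le>k. lam i \<ge> 0" "(\<Sum>i=0..k. lam i) = 1"
    and "istar \<le> k" "lam istar = 0" "\<forall>i\<le>k. i \<noteq> istar \<longrightarrow> lam i \<noteq> 0"
    and m: "m = k + min ((k - istar) mod 2) (n - k)"
  obtains \<sigma> x where "density n \<sigma>"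
    and "\<And>S a b. S \<subseteq> qubits n \<Longrightarrow> card S < m \<Longrightarrow> a \<subseteq> S \<Longrightarrow> b \<subseteq> S \<Longrightarrow>
           ptrace n \<sigma> S a b = ptrace n (dicke_mix n k lam) S a b"
    and "x \<in> Pow (qubits n)" "\<sigma> x x \<noteq> dicke_mix n k lam x x"
proof -
  have "m \<le> n" "k \<le> m" using assms by auto
  have m_cases: "m = k \<or> m = Suc k \<and> odd (k - istar)"
    using m mod2_eq_if[of "k - istar"] by (auto simp: min_def split: if_splits)
  obtain \<epsilon>0 where "\<epsilon>0 > 0" and \<epsilon>0_le: "\<And>i. i \<le> k \<Longrightarrow> i \<noteq> istar \<Longrightarrow> \<epsilon>0 \<le> lam i"
    using exists_pos_le_nonzero_weights assms(3,7) by blast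
  define \<epsilon> where "\<epsilon> = \<epsilon>0 / 2 ^ m"
  define alt where "alt w = (-1) ^ w * real (m choose w)" for w
  define \<mu> where "\<mu> = (\<lambda>w. (if w \<le> k then lam w else 0) + \<epsilon> * (-1) ^ istar * alt w)"
  define \<rho> where "\<rho> = dicke_mix n k lam"
  define \<sigma> where "\<sigma> = dicke_mix n m \<mu>"
  have \<sigma>_eq: "\<sigma> = (\<lambda>x y. \<rho> x y + of_real (\<epsilon> * (-1) ^ istar) * dicke_mix n m alt x y)"
    unfolding \<sigma>_def \<rho>_def \<mu>_def dicke_mix_add_scaled[abs_def] dicke_mix_truncate[OF \<open>k \<le> m\<close>] ..
  have \<mu>_eq: "\<mu> w = (if w \<le> k then lam w else 0) + \<epsilon> * (-1) ^ (istar + w) * real (m choose w)" for w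
    by (simp add: \<mu>_def alt_def power_add)
  have "\<epsilon> > 0" using \<open>\<epsilon>0 > 0\<close> by (simp add: \<epsilon>_def)
  have "\<epsilon> * 2 ^ m \<le> lam i" if "i \<le> k" "i \<noteq> istar" for i
    using \<epsilon>0_le[OF that] by (simp add: \<epsilon>_def)
  then have "\<forall>i\<le>m. \<mu> i \<ge> 0"
    unfolding \<mu>_eq using alternating_perturbation_nonneg[OF assms(3,5) less_imp_le[OF \<open>\<epsilon> > 0\<close>] _ m_cases]
    by blast
  moreover have "(\<Sum>i=0..m. \<mu> i) = 1"
    using sum_alternating_perturbation[of m k lam] assms(1,4) \<open>k \<le> m\<close> by (simp add: \<mu>_def alt_def)
  ultimately have dens: "density n \<sigma>"
    unfolding \<sigma>_def using \<open>m \<le> n\<close> by (intro density_dicke_mix) auto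
  have marg: "ptrace n \<sigma> S a b = ptrace n \<rho> S a b"
    if "S \<subseteq> qubits n" "card S < m" "a \<subseteq> S" "b \<subseteq> S" for S a b
    unfolding \<sigma>_eq ptrace_add_scaled alt_def
    using ptrace_dicke_mix_alternating[OF \<open>m \<le> n\<close> that] by simp
  define x where "x = {1..istar}"
  have x: "x \<in> Pow (qubits n)" "card x = istar" using assms by (auto simp: x_def qubits_def)
  have "\<sigma> x x = of_real (\<mu> istar / real (n choose istar))"
    using x \<open>istar \<le> k\<close> \<open>k \<le> m\<close> by (simp add: \<sigma>_def dicke_mix_entry)
  moreover have "\<rho> x x = 0" using x \<open>lam istar = 0\<close> by (simp add: \<rho>_def dicke_mix_entry)
  moreover have "\<mu> istar / real (n choose istar) > 0"
    using \<open>\<epsilon> > 0\<close> \<open>lam istar = 0\<close> \<open>istar \<le> k\<close> \<open>k \<le> m\<close> \<open>k \<le> n\<close> by (simp add: \<mu>_eq)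
  ultimately have "\<sigma> x x \<noteq> \<rho> x x" using \<open>istar \<le> k\<close> \<open>k \<le> n\<close> by auto
  then show ?thesis using that[OF dens marg[unfolded \<rho>_def] x(1)] unfolding \<rho>_def by blast
qed

lemma not_determines_dicke_mix:
  fixes lam :: "nat \<Rightarrow> real"
  assumes "1 \<le> k" "k \<le> n" "\<forall>i\<le>k. lam i \<ge> 0" "(\<Sum>i=0..k. lam i) = 1"
    and "istar \<le> k" "lam istar = 0" "\<forall>i\<le>k. i \<noteq> istar \<longrightarrow> lam i \<noteq> 0"
    and small: "\<forall>S\<in>\<S>. card S < k + min ((k - istar) mod 2) (n - k)"
  shows "\<not> determines n \<S> (dicke_mix n k lam)"
proof
  assume det: "determines n \<S> (dicke_mix n k lam)"
  obtain \<sigma> x where "density n \<sigma>"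
    and marg: "\<And>S a b. S \<subseteq> qubits n \<Longrightarrow> card S < k + min ((k - istar) mod 2) (n - k) \<Longrightarrow>
      a \<subseteq> S \<Longrightarrow> b \<subseteq> S \<Longrightarrow> ptrace n \<sigma> S a b = ptrace n (dicke_mix n k lam) S a b"
    and "x \<in> Pow (qubits n)" "\<sigma> x x \<noteq> dicke_mix n k lam x x"
    using obtain_marginal_twin_dicke_mix[OF assms(1-7) refl] by blast
  moreover have "\<sigma> \<in> compatible n (dicke_mix n k lam) \<S>"
    using det small \<open>density n \<sigma>\<close> unfolding compatible_def determines_def
    by (auto intro!: marg)
  ultimately show False using det unfolding determines_def by blast
qed

section \<open>Upper bound\<close>

definition diag_weight :: "nat \<Rightarrow> op \<Rightarrow> nat \<Rightarrow> complex" where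
  "diag_weight n \<tau> w = (\<Sum>x\<in>{x\<in>Pow (qubits n). card x = w}. \<tau> x x)"

lemma ptrace_diag_eq_sum_supersets:
  assumes "T \<subseteq> qubits n"
  shows "ptrace n \<tau> T T T = (\<Sum>x\<in>{x\<in>Pow (qubits n). T \<subseteq> x}. \<tau> x x)"
proof -
  have "bij_betw (\<lambda>c. T \<union> c) (Pow (qubits n - T)) {x\<in>Pow (qubits n). T \<subseteq> x}"
    using assms by (intro bij_betw_byWitness[where f' = "\<lambda>x. x - T"]) auto
  then show ?thesis unfolding ptrace_def by (rule sum.reindex_bij_betw)
qed

lemma sum_ptrace_diag_eq_moment:
  "(\<Sum>T\<in>{T\<in>Pow (qubits n). card T = j}. ptrace n \<tau> T T T)
   = (\<Sum>w\<le>n. of_nat (w choose j) * diag_weight n \<tau> w)"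
proof -
  let ?P = "Pow (qubits n)"
  have "(\<Sum>T\<in>{T\<in>?P. card T = j}. ptrace n \<tau> T T T)
      = (\<Sum>T\<in>{T\<in>?P. card T = j}. \<Sum>x\<in>{x\<in>?P. T \<subseteq> x}. \<tau> x x)"
    by (intro sum.cong refl) (simp add: ptrace_diag_eq_sum_supersets)
  also have "\<dots> = (\<Sum>x\<in>?P. \<Sum>T\<in>{T\<in>{T\<in>?P. card T = j}. T \<subseteq> x}. \<tau> x x)"
    by (rule sum.swap_restrict) auto
  also have "\<dots> = (\<Sum>x\<in>?P. of_nat (card x choose j) * \<tau> x x)"
  proof (intro sum.cong refl)
    fix x assume x: "x \<in> ?P"
    then have "{T\<in>{T\<in>?P. card T = j}. T \<subseteq> x} = {T. T \<subseteq> x \<and> card T = j}" by auto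
    moreover have "finite x" using x by (auto intro: finite_subset)
    ultimately show "(\<Sum>T\<in>{T\<in>{T\<in>?P. card T = j}. T \<subseteq> x}. \<tau> x x) = of_nat (card x choose j) * \<tau> x x"
      by (simp add: n_subsets)
  qed
  also have "\<dots> = (\<Sum>w\<le>n. \<Sum>x\<in>{x\<in>?P. card x = w}. of_nat (card x choose j) * \<tau> x x)"
    by (rule sum.group[symmetric]) (auto intro: card_mono[of "qubits n", simplified])
  also have "\<dots> = (\<Sum>w\<le>n. of_nat (w choose j) * diag_weight n \<tau> w)"
    unfolding diag_weight_def by (intro sum.cong refl) (simp add: sum_distrib_left)
  finally show ?thesis .
qed

text \<open>Matching diagonal marginals of size \<open>j \<le> m\<close> makes the difference of the weight
  distributions orthogonal to \<open>binom w j\<close>, hence to all polynomials of degree \<open>\<le> m\<close>.\<close>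

lemma marginals_diag_zero_above:
  assumes dens: "density n \<sigma>" and "k \<le> n" "istar \<le> k"
    and m: "k + min ((k - istar) mod 2) (n - k) \<le> m"
    and marg: "\<And>T. T \<subseteq> qubits n \<Longrightarrow> card T \<le> m \<Longrightarrow> ptrace n \<sigma> T T T = ptrace n \<rho> T T T"
    and \<rho>_zero: "\<And>x. x \<subseteq> qubits n \<Longrightarrow> card x = istar \<or> k < card x \<Longrightarrow> \<rho> x x = 0"
    and x: "x \<subseteq> qubits n" "k < card x"
  shows "\<sigma> x x = 0"
proof -
  let ?P = "Pow (qubits n)"
  have "card x \<le> n" using x card_mono[of "qubits n" x] by simp
  then have "k < n" using x by simp
  define d where "d w = Re (diag_weight n \<sigma> w) - Re (diag_weight n \<rho> w)" for w
  have orth: "(\<Sum>w\<le>n. d w * falling w j) = 0" if "j \<le> m" for j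
  proof -
    have "(\<Sum>w\<le>n. of_nat (w choose j) * diag_weight n \<sigma> w) = (\<Sum>w\<le>n. of_nat (w choose j) * diag_weight n \<rho> w)"
      unfolding sum_ptrace_diag_eq_moment[symmetric] using that by (intro sum.cong refl) (auto intro: marg)
    then have "Re (\<Sum>w\<le>n. of_nat (w choose j) * diag_weight n \<sigma> w)
        = Re (\<Sum>w\<le>n. of_nat (w choose j) * diag_weight n \<rho> w)"
      by simp
    then have "(\<Sum>w\<le>n. real (w choose j) * Re (diag_weight n \<sigma> w))
        = (\<Sum>w\<le>n. real (w choose j) * Re (diag_weight n \<rho> w))"
      by (simp add: Re_sum)
    then have "(\<Sum>w\<le>n. d w * real (w choose j)) = 0"
      unfolding d_def by (simp add: algebra_simps sum_subtractf)
    then show ?thesis by (simp add: binomial_eq_falling sum_divide_distrib[symmetric])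
  qed
  have \<sigma>_weight_nonneg: "Re (diag_weight n \<sigma> w) \<ge> 0" for w
    unfolding diag_weight_def Re_sum using density_diag_nonneg[OF dens]
    by (intro sum_nonneg) (auto simp: less_eq_complex_def)
  have \<rho>_weight_zero: "diag_weight n \<rho> w = 0" if "w = istar \<or> k < w" for w
    unfolding diag_weight_def using that by (intro sum.neutral) (auto intro: \<rho>_zero)
  have "d (card x) = 0"
  proof (rule orthogonal_sequence_vanishes_above[OF \<open>k < n\<close> \<open>istar \<le> k\<close> _ orth])
    have "(k - istar) mod 2 \<le> n - k" using \<open>k < n\<close> mod_less_divisor[of 2 "k - istar"] by linarith
    then show "k + (k - istar) mod 2 \<le> m" using m by (simp add: min_absorb1)
    show "0 \<le> d istar" using \<sigma>_weight_nonneg \<rho>_weight_zero by (simp add: d_def)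
    show "0 \<le> d w" if "k < w" for w using \<sigma>_weight_nonneg \<rho>_weight_zero that by (simp add: d_def)
  qed (use x \<open>card x \<le> n\<close> in auto)
  then have "Re (diag_weight n \<sigma> (card x)) = 0" using \<rho>_weight_zero x by (simp add: d_def)
  then have "(\<Sum>y\<in>{y\<in>?P. card y = card x}. Re (\<sigma> y y)) = 0"
    by (simp add: diag_weight_def Re_sum)
  then have "Re (\<sigma> x x) = 0"
    using density_diag_nonneg[OF dens] x
    by (subst (asm) sum_nonneg_eq_0_iff) (auto simp: less_eq_complex_def)
  then show ?thesis using density_diag_nonneg[OF dens] x by (auto simp: less_eq_complex_def complex_eq_iff)
qed

text \<open>The marginal on \<open>b\<close> at \<open>(a, b)\<close> is \<open>\<sigma> a b\<close> plus entries \<open>\<sigma> (a \<union> c) (b \<union> c)\<close> with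
  \<open>b \<union> c\<close> strictly larger, so downward induction on \<open>card b\<close> applies.\<close>

lemma marginals_subset_entries_eq:
  assumes marg: "\<And>a b. b \<subseteq> qubits n \<Longrightarrow> card b \<le> k \<Longrightarrow> a \<subseteq> b \<Longrightarrow> ptrace n \<sigma> b a b = ptrace n \<rho> b a b"
    and high: "\<And>a b. b \<subseteq> qubits n \<Longrightarrow> a \<subseteq> b \<Longrightarrow> k < card b \<Longrightarrow> \<sigma> a b = \<rho> a b"
    and "b \<subseteq> qubits n" "a \<subseteq> b"
  shows "\<sigma> a b = \<rho> a b"
  using assms(3,4)
proof (induction "n - card b" arbitrary: a b rule: less_induct)
  case less
  show ?case
  proof (cases "k < card b")
    case False
    let ?C = "Pow (qubits n - b) - {{}}"
    have split: "ptrace n \<tau> b a b = \<tau> a b + (\<Sum>c\<in>?C. \<tau> (a \<union> c) (b \<union> c))" for \<tau>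
      unfolding ptrace_def by (subst sum.remove[of _ "{}"]) auto
    have "\<sigma> (a \<union> c) (b \<union> c) = \<rho> (a \<union> c) (b \<union> c)" if c: "c \<in> ?C" for c
    proof (rule less.hyps)
      have "finite b" "finite c" using less.prems c by (auto intro: finite_subset)
      then have "card b < card (b \<union> c)" using c by (auto intro: psubset_card_mono)
      moreover have "card (b \<union> c) \<le> n" using less.prems c card_mono[of "qubits n" "b \<union> c"] by auto
      ultimately show "n - card (b \<union> c) < n - card b" by simp
    qed (use less.prems c in auto)
    then show ?thesis
      using marg[OF less.prems(1) _ less.prems(2)] False split[of \<sigma>] split[of \<rho>] by simp
  qed (use less.prems high in auto)
qed

text \<open>Positive semidefiniteness bounds each \<open>Re (\<sigma> (p \<union> c) (q \<union> c))\<close> by the diagonal; equal sums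
  force equality termwise, which puts \<open>|p \<union> c\<rangle> - |q \<union> c\<rangle>\<close> in the kernel.\<close>

lemma density_swap_columns_eq:
  assumes dens: "density n \<sigma>" and pq: "p \<in> qubits n" "q \<in> qubits n" "p \<noteq> q"
    and diag: "\<And>c. c \<in> Pow (qubits n - {p, q}) \<Longrightarrow> \<sigma> (insert q c) (insert q c) = \<sigma> (insert p c) (insert p c)"
    and sum_eq: "(\<Sum>c\<in>Pow (qubits n - {p, q}). \<sigma> (insert p c) (insert q c))
               = (\<Sum>c\<in>Pow (qubits n - {p, q}). \<sigma> (insert p c) (insert p c))"
    and c: "c \<in> Pow (qubits n - {p, q})" and z: "z \<in> Pow (qubits n)"
  shows "\<sigma> z (insert p c) = \<sigma> z (insert q c)"
proof -
  let ?C = "Pow (qubits n - {p, q})"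
  have P: "insert p y \<in> Pow (qubits n)" "insert q y \<in> Pow (qubits n)" if "y \<in> ?C" for y
    using that pq by auto
  have le: "Re (\<sigma> (insert p y) (insert q y)) \<le> Re (\<sigma> (insert p y) (insert p y))" if "y \<in> ?C" for y
    using density_re_le_diag[OF dens P[OF that]] diag[OF that] by simp
  have "(\<Sum>y\<in>?C. Re (\<sigma> (insert p y) (insert p y)) - Re (\<sigma> (insert p y) (insert q y))) = 0"
    using arg_cong[OF sum_eq, of Re] by (simp add: Re_sum sum_subtractf)
  then have re_eq: "Re (\<sigma> (insert p c) (insert q c)) = Re (\<sigma> (insert p c) (insert p c))"
    using c le by (subst (asm) sum_nonneg_eq_0_iff) auto
  have "Im (\<sigma> (insert p c) (insert p c)) = 0"
    using density_diag_nonneg[OF dens P(1)[OF c]] by (simp add: less_eq_complex_def)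
  then have "\<sigma> (insert p c) (insert p c) + \<sigma> (insert q c) (insert q c)
      - \<sigma> (insert p c) (insert q c) - \<sigma> (insert q c) (insert p c) = 0"
    using density_hermitian[OF dens P[OF c]] diag[OF c] re_eq by (simp add: complex_eq_iff)
  then show ?thesis using density_columns_eq[OF dens P[OF c] z] by simp
qed

lemma columns_eq_of_swaps:
  assumes dens: "density n \<sigma>"
    and diag: "\<And>x x'. x \<in> Pow (qubits n) \<Longrightarrow> x' \<in> Pow (qubits n) \<Longrightarrow> card x = card x' \<Longrightarrow> \<sigma> x x = \<sigma> x' x'"
    and swap: "\<And>p q c z. p \<in> qubits n \<Longrightarrow> q \<in> qubits n \<Longrightarrow> p \<noteq> q \<Longrightarrow> c \<in> Pow (qubits n - {p, q}) \<Longrightarrow>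
       z \<in> Pow (qubits n) \<Longrightarrow> \<sigma> (insert p c) (insert p c) \<noteq> 0 \<Longrightarrow> \<sigma> z (insert p c) = \<sigma> z (insert q c)"
    and "x \<in> Pow (qubits n)" "x' \<in> Pow (qubits n)" "card x = card x'" "z \<in> Pow (qubits n)"
  shows "\<sigma> z x = \<sigma> z x'"
  using assms(4-)
proof (induction "card (x - x')" arbitrary: x rule: less_induct)
  case less
  show ?case
  proof (cases "\<sigma> x x = 0 \<or> x = x'")
    case True
    then show ?thesis
      using density_diag_zero[OF dens] diag[OF less.prems(1-3)] less.prems by metis
  next
    case False
    have "finite x" "finite x'" using less.prems by (auto intro: finite_subset)
    then obtain p q where p: "p \<in> x" "p \<notin> x'" and q: "q \<in> x'" "q \<notin> x"
      using False less.prems(3) by (metis card_subset_eq subsetI)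
    define c where "c = x - {p}"
    have x_eq: "x = insert p c" and c: "c \<in> Pow (qubits n - {p, q})" "p \<notin> c"
      using p q less.prems(1) by (auto simp: c_def)
    have "finite c" using \<open>finite x\<close> by (simp add: c_def)
    have "\<sigma> z x = \<sigma> z (insert q c)"
      using swap[of p q c z] x_eq c p q less.prems False by auto
    also have "\<dots> = \<sigma> z x'"
    proof (rule less.hyps)
      have "insert q c - x' = (x - x') - {p}" using p q by (auto simp: c_def)
      moreover have "card ((x - x') - {p}) < card (x - x')"
        using p \<open>finite x\<close> by (intro card_Diff1_less) auto
      ultimately show "card (insert q c - x') < card (x - x')" by simp
      show "card (insert q c) = card x'"
        using less.prems(3) x_eq c q \<open>finite c\<close> by auto
    qed (use less.prems q c in auto)
    finally show ?thesis .
  qed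
qed

lemma dicke_mix_swap_columns_eq:
  assumes dens: "density n \<sigma>"
    and diag: "\<And>x. x \<in> Pow (qubits n) \<Longrightarrow> \<sigma> x x = dicke_mix n K \<mu> x x"
    and pair: "ptrace n \<sigma> {p, q} {p} {q} = ptrace n (dicke_mix n K \<mu>) {p, q} {p} {q}"
    and pq: "p \<in> qubits n" "q \<in> qubits n" "p \<noteq> q"
    and c: "c \<in> Pow (qubits n - {p, q})" and z: "z \<in> Pow (qubits n)"
  shows "\<sigma> z (insert p c) = \<sigma> z (insert q c)"
proof (rule density_swap_columns_eq[OF dens pq _ _ c z])
  let ?C = "Pow (qubits n - {p, q})"
  have card_eq: "card (insert q y) = card (insert p y)" if "y \<in> ?C" for y
  proof -
    have "finite y" "p \<notin> y" "q \<notin> y" using that finite_subset[of y "qubits n"] by auto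
    then show ?thesis by simp
  qed
  have P: "insert p y \<in> Pow (qubits n)" "insert q y \<in> Pow (qubits n)" if "y \<in> ?C" for y
    using that pq by auto
  show diag_swap: "\<sigma> (insert q y) (insert q y) = \<sigma> (insert p y) (insert p y)" if "y \<in> ?C" for y
    using diag[OF P(1)[OF that]] diag[OF P(2)[OF that]] card_eq[OF that] P[OF that]
    by (simp add: dicke_mix_entry)
  have "(\<Sum>y\<in>?C. \<sigma> (insert p y) (insert q y)) = (\<Sum>y\<in>?C. dicke_mix n K \<mu> (insert p y) (insert q y))"
    using pair pq by (simp add: ptrace_def)
  also have "\<dots> = (\<Sum>y\<in>?C. \<sigma> (insert p y) (insert p y))"
    using diag P card_eq by (intro sum.cong refl) (simp add: dicke_mix_entry)
  finally show "(\<Sum>y\<in>?C. \<sigma> (insert p y) (insert q y)) = (\<Sum>y\<in>?C. \<sigma> (insert p y) (insert p y))" .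
qed

context
  fixes n k istar m :: nat and lam :: "nat \<Rightarrow> real" and \<sigma> :: op
  assumes k_le_n: "k \<le> n" and istar_le_k: "istar \<le> k" and lam_istar: "lam istar = 0"
    and m_ge: "k + min ((k - istar) mod 2) (n - k) \<le> m"
    and dens: "density n \<sigma>"
    and marg: "\<And>S a b. S \<subseteq> qubits n \<Longrightarrow> card S \<le> m \<Longrightarrow> a \<subseteq> S \<Longrightarrow> b \<subseteq> S \<Longrightarrow>
      ptrace n \<sigma> S a b = ptrace n (dicke_mix n k lam) S a b"
begin

lemma marginals_dicke_mix_eq_high:
  assumes "a \<subseteq> qubits n" "b \<subseteq> qubits n" "k < card a \<or> k < card b"
  shows "\<sigma> a b = dicke_mix n k lam a b"
proof -
  have diag_zero: "\<sigma> x x = 0" if "x \<subseteq> qubits n" "k < card x" for x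
  proof (rule marginals_diag_zero_above[OF dens k_le_n istar_le_k m_ge])
    show "ptrace n \<sigma> T T T = ptrace n (dicke_mix n k lam) T T T"
      if "T \<subseteq> qubits n" "card T \<le> m" for T
      using marg that by auto
    show "dicke_mix n k lam y y = 0" if "y \<subseteq> qubits n" "card y = istar \<or> k < card y" for y
      using that lam_istar by (auto simp: dicke_mix_entry)
  qed (use that in auto)
  have "\<sigma> a b = 0"
    using assms density_diag_zero[OF dens _ _ diag_zero] by blast
  moreover have "dicke_mix n k lam a b = 0" using assms by (auto simp: dicke_mix_entry)
  ultimately show ?thesis by simp
qed

lemma marginals_dicke_mix_eq_subset:
  assumes "b \<subseteq> qubits n" "a \<subseteq> b"
  shows "\<sigma> a b = dicke_mix n k lam a b"
proof (rule marginals_subset_entries_eq[where k = k])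
  show "ptrace n \<sigma> b' a' b' = ptrace n (dicke_mix n k lam) b' a' b'"
    if "b' \<subseteq> qubits n" "card b' \<le> k" "a' \<subseteq> b'" for a' b'
    using marg[of b' a' b'] m_ge that by auto
  show "\<sigma> a' b' = dicke_mix n k lam a' b'" if "b' \<subseteq> qubits n" "a' \<subseteq> b'" "k < card b'" for a' b'
    using marginals_dicke_mix_eq_high[of a' b'] that by auto
qed (use assms in auto)

text \<open>A column carrying weight has Hamming weight between \<open>1\<close> and \<open>k\<close> and different from \<open>i\<^sub>*\<close>,
  which forces \<open>m \<ge> 2\<close>, so that the \<open>{p,q}\<close>-marginals are available.\<close>

lemma marginals_dicke_mix_columns_eq:
  assumes "2 \<le> n" "x \<in> Pow (qubits n)" "x' \<in> Pow (qubits n)" "card x = card x'" "z \<in> Pow (qubits n)"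
  shows "\<sigma> z x = \<sigma> z x'"
proof -
  have diag: "\<sigma> y y = dicke_mix n k lam y y" if "y \<in> Pow (qubits n)" for y
    using marginals_dicke_mix_eq_subset that by auto
  have swap: "\<sigma> z (insert p c) = \<sigma> z (insert q c)"
    if "p \<in> qubits n" "q \<in> qubits n" "p \<noteq> q" "c \<in> Pow (qubits n - {p, q})" "z \<in> Pow (qubits n)"
      and nonzero: "\<sigma> (insert p c) (insert p c) \<noteq> 0" for p q c z
  proof (rule dicke_mix_swap_columns_eq[OF dens diag _ that(1-5)])
    have "insert p c \<in> Pow (qubits n)" "finite c" using that finite_subset[of c "qubits n"] by auto
    then have "card (insert p c) \<le> k" "card (insert p c) \<noteq> istar"
      using diag nonzero lam_istar by (auto simp: dicke_mix_entry split: if_splits)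
    moreover have "1 \<le> card (insert p c)" using \<open>finite c\<close> by (simp add: Suc_le_eq card_gt_0_iff)
    ultimately have "2 \<le> m"
      using \<open>2 \<le> n\<close> istar_le_k m_ge by (cases "k = 1") auto
    then show "ptrace n \<sigma> {p, q} {p} {q} = ptrace n (dicke_mix n k lam) {p, q} {p} {q}"
      using marg[of "{p, q}" "{p}" "{q}"] that by (auto simp: card_insert_if)
  qed
  show ?thesis
  proof (rule columns_eq_of_swaps[OF dens _ swap assms(2-5)])
    show "\<sigma> y y = \<sigma> y' y'" if "y \<in> Pow (qubits n)" "y' \<in> Pow (qubits n)" "card y = card y'" for y y'
      using diag that by (simp add: dicke_mix_entry)
  qed
qed

lemma marginals_dicke_mix_eq:
  assumes "2 \<le> n" and x: "x \<in> Pow (qubits n)" and y: "y \<in> Pow (qubits n)"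
  shows "\<sigma> x y = dicke_mix n k lam x y"
proof -
  have lower: "\<sigma> v u = dicke_mix n k lam v u"
    if u: "u \<in> Pow (qubits n)" and v: "v \<in> Pow (qubits n)" and le: "card u \<le> card v" for u v
  proof (cases "k < card v")
    case True
    then show ?thesis using marginals_dicke_mix_eq_high u v by auto
  next
    case False
    obtain u' where u': "u' \<subseteq> v" "card u' = card u"
      using obtain_subset_with_card_n[OF le] by metis
    then have "u' \<in> Pow (qubits n)" using v by auto
    have "\<sigma> v u = \<sigma> v u'"
      using marginals_dicke_mix_columns_eq[OF \<open>2 \<le> n\<close> u \<open>u' \<in> Pow (qubits n)\<close> _ v] u' by simp
    also have "\<dots> = cnj (\<sigma> u' v)" using density_hermitian[OF dens \<open>u' \<in> Pow (qubits n)\<close> v] .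
    also have "\<dots> = cnj (dicke_mix n k lam u' v)" using marginals_dicke_mix_eq_subset v u' by simp
    also have "\<dots> = dicke_mix n k lam v u" using u' u v by (auto simp: dicke_mix_entry)
    finally show ?thesis .
  qed
  show ?thesis
  proof (cases "card x \<le> card y")
    case True
    have "\<sigma> x y = cnj (\<sigma> y x)" using density_hermitian[OF dens y x] .
    also have "\<dots> = dicke_mix n k lam x y" using lower[OF x y True] x y by (simp add: dicke_mix_entry)
    finally show ?thesis .
  qed (use lower x y in auto)
qed

end

lemma determines_dicke_mix:
  fixes lam :: "nat \<Rightarrow> real"
  assumes "2 \<le> n" "k \<le> n" "istar \<le> k" "lam istar = 0"
  shows "determines n {S \<in> Pow (qubits n). card S \<le> k + min ((k - istar) mod 2) (n - k)}
    (dicke_mix n k lam)"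
proof -
  have "\<sigma> x y = dicke_mix n k lam x y"
    if "density n \<sigma>" and "\<forall>S\<in>{S \<in> Pow (qubits n). card S \<le> k + min ((k - istar) mod 2) (n - k)}.
        \<forall>a\<in>Pow S. \<forall>b\<in>Pow S. ptrace n \<sigma> S a b = ptrace n (dicke_mix n k lam) S a b"
      and "x \<in> Pow (qubits n)" "y \<in> Pow (qubits n)" for \<sigma> x y
    using marginals_dicke_mix_eq[where lam = lam and istar = istar, OF assms(2-4) order_refl that(1) _
        assms(1) that(3,4)] that(2)
    by auto
  then show ?thesis unfolding determines_def compatible_def by auto
qed

theorem proposition2:
  fixes n k istar :: nat and lam :: "nat \<Rightarrow> real"
  assumes "n \<ge> 2" and "1 \<le> k" and "k \<le> n"
    and "\<forall>i\<le>k. lam i \<ge> 0"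
    and "(\<Sum>i=0..k. lam i) = 1"
    and "istar \<le> k" and "lam istar = 0"
    and "\<forall>i\<le>k. i \<noteq> istar \<longrightarrow> lam i \<noteq> 0"
  shows "sdl n (dicke_mix n k lam) = k + min ((k - istar) mod 2) (n - k)"
  unfolding sdl_def
proof (rule Least_equality)
  show "\<exists>\<S>. determines n \<S> (dicke_mix n k lam) \<and> (\<forall>S\<in>\<S>. card S \<le> k + min ((k - istar) mod 2) (n - k))"
    using determines_dicke_mix[of n k istar lam] assms by blast
next
  fix l assume "\<exists>\<S>. determines n \<S> (dicke_mix n k lam) \<and> (\<forall>S\<in>\<S>. card S \<le> l)"
  then obtain \<S> where "determines n \<S> (dicke_mix n k lam)" "\<forall>S\<in>\<S>. card S \<le> l" by blast
  then show "k + min ((k - istar) mod 2) (n - k) \<le> l"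
    using not_determines_dicke_mix[OF assms(2-8), of \<S>] by force
qed

end
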